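(* Let $\Phi=P.\phi$ be a DQBF with prefix $P=\forall x_1,\dots,x_n\,\exists y_1(D_1),\dots,y_k(D_k)$. If $G_{\mathrm{syn}}$ is a syntactic symmetry group for $\Phi$, then the associated group $G_{\mathrm{sem}}$ of $G_{\mathrm{syn}}$ is a semantic symmetry group for $\Phi$ (in particular, it is a group under composition).
   Context: $X=\{x_1,\dots,x_n\}$, $Y=\{y_1,\dots,y_k\}$ are finite disjoint sets of propositional variables; $\operatorname{BF}(V)$ the propositional formulas over $V\subseteq X\cup Y$; $\mathcal A(V)$ the assignments $V\to\{\top,\bot\}$; $[\phi]_\sigma$ the truth value; $\phi\in\operatorname{BF}(X\cup Y)$; $D_j\subseteq X$. An interpretation is $s=(s_1,\dots,s_k)$ with $s_j:\{\top,\bot\}^{|D_j|}\to\{\top,\bot\}$; $\mathcal S(P)$ the set of interpretations. For $\sigma\in\mathcal A(X)$, $\sigma_s\in\mathcal A(X\cup Y)$ equals $\sigma$ on $X$ and $\sigma_s(y_j)=s_j$ evaluated at $\sigma$'s values on $D_j$. $[P.\phi]_s=\bigwedge_{\sigma\in\mathcal A(X)}[\phi]_{\sigma_s}$. For $g:\operatorname{BF}(V)\to\operatorname{BF}(V)$ and $\rho\in\mathcal A(V)$, $g(\rho)(v)=[g(v)]_\rho$; $g$ preserves propositional satisfiability if $[g(\phi)]_\rho=[\phi]_{g(\rho)}$ always. A formula in $\operatorname{BF}(Y)$ depends on $x_i$ if it contains some $y_j$ with $x_i\in D_j$. A bijection $g$ of $\operatorname{BF}(X\cup Y)$ is admissible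 w.r.t. $P$ if it preserves propositional satisfiability, $g(x_i)\in\operatorname{BF}(X)$, $g(y_j)\in\operatorname{BF}(Y)$, and if $g(y_j)$ depends on $x_i$ then $g^{-1}(x_i)\in\operatorname{BF}(D_j)$. An admissible group is a subgroup of all admissible functions. For admissible $g$ and $\sigma\in\mathcal A(X)$, $g(\sigma)(x)=[g(x)]_\sigma$. A syntactic symmetry group for $P.\phi$ is an admissible group $G$ with $[P.\phi]_s=[P.g(\phi)]_s$ for all $g\in G$, $s\in\mathcal S(P)$. The associated group of $G_{\mathrm{syn}}$ is the set of all bijections $f:\mathcal S(P)\to\mathcal S(P)$ such that for every $s\in\mathcal S(P)$ and $\sigma\in\mathcal A(X)$ there exists $g\in G_{\mathrm{syn}}$ with $g(\sigma)_{f(s)}=g(\sigma_s)$. A semantic symmetry group for $P.\phi$ is a group $G$ of bijections of $\mathcal S(P)$ with $[P.\phi]_s=[P.\phi]_{f(s)}$ for all $f\in G$, $s\in\mathcal S(P)$. *)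

theory Defs
  imports Main "HOL-Algebra.Bij"
begin

datatype 'v form = FTrue | FFalse | Var 'v | Neg "'v form"
  | Conj "'v form" "'v form" | Disj "'v form" "'v form"

primrec fvars :: "'v form \<Rightarrow> 'v set" where
  "fvars FTrue = {}" | "fvars FFalse = {}" | "fvars (Var v) = {v}"
| "fvars (Neg a) = fvars a" | "fvars (Conj a b) = fvars a \<union> fvars b"
| "fvars (Disj a b) = fvars a \<union> fvars b"

primrec feval :: "'v form \<Rightarrow> ('v \<Rightarrow> bool) \<Rightarrow> bool" where
  "feval FTrue \<rho> = True" | "feval FFalse \<rho> = False" | "feval (Var v) \<rho> = \<rho> v"
| "feval (Neg a) \<rho> = (\<not> feval a \<rho>)"
| "feval (Conj a b) \<rho> = (feval a \<rho> \<and> feval b \<rho>)"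
| "feval (Disj a b) \<rho> = (feval a \<rho> \<or> feval b \<rho>)"

definition BF :: "'v set \<Rightarrow> 'v form set" where
  "BF V = {\<phi>. fvars \<phi> \<subseteq> V}"

(* A(V): assignments V -> bool, represented canonically as total functions
   that are False outside V *)
definition Asg :: "'v set \<Rightarrow> ('v \<Rightarrow> bool) set" where
  "Asg V = {\<sigma>. \<forall>v. v \<notin> V \<longrightarrow> \<sigma> v = False}"

(* Interpretations S(P): s y is a Skolem function for y \<in> Y depending only
   on the values of the variables in D y; canonical value outside Y *)
definition Interp :: "'v set \<Rightarrow> ('v \<Rightarrow> 'v set) \<Rightarrow> ('v \<Rightarrow> ('v \<Rightarrow> bool) \<Rightarrow> bool) set" where
  "Interp Y D = {s. (\<forall>y\<in>Y. \<forall>\<sigma> \<sigma>'. (\<forall>x\<in>D y. \<sigma> x = \<sigma>' x) \<longrightarrow> s y \<sigma> = s y \<sigma>')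
                 \<and> (\<forall>v. v \<notin> Y \<longrightarrow> s v = (\<lambda>_. False))}"

definition ext_asg :: "'v set \<Rightarrow> ('v \<Rightarrow> ('v \<Rightarrow> bool) \<Rightarrow> bool) \<Rightarrow> ('v \<Rightarrow> bool) \<Rightarrow> ('v \<Rightarrow> bool)" where
  "ext_asg Y s \<sigma> = (\<lambda>v. if v \<in> Y then s v \<sigma> else \<sigma> v)"

definition dqbf_val :: "'v set \<Rightarrow> 'v set \<Rightarrow> 'v form \<Rightarrow> ('v \<Rightarrow> ('v \<Rightarrow> bool) \<Rightarrow> bool) \<Rightarrow> bool" where
  "dqbf_val X Y \<phi> s = (\<forall>\<sigma>\<in>Asg X. feval \<phi> (ext_asg Y s \<sigma>))"

definition act_asg :: "('v form \<Rightarrow> 'v form) \<Rightarrow> ('v \<Rightarrow> bool) \<Rightarrow> ('v \<Rightarrow> bool)" where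
  "act_asg g \<rho> = (\<lambda>v. feval (g (Var v)) \<rho>)"

definition act_asgX :: "'v set \<Rightarrow> ('v form \<Rightarrow> 'v form) \<Rightarrow> ('v \<Rightarrow> bool) \<Rightarrow> ('v \<Rightarrow> bool)" where
  "act_asgX X g \<sigma> = (\<lambda>v. if v \<in> X then feval (g (Var v)) \<sigma> else False)"

definition preserves_sat :: "('v form \<Rightarrow> 'v form) \<Rightarrow> bool" where
  "preserves_sat g = (\<forall>\<phi> \<rho>. feval (g \<phi>) \<rho> = feval \<phi> (act_asg g \<rho>))"

definition depends_on :: "('v \<Rightarrow> 'v set) \<Rightarrow> 'v form \<Rightarrow> 'v \<Rightarrow> bool" where
  "depends_on D \<psi> x = (\<exists>y\<in>fvars \<psi>. x \<in> D y)"

definition admissible :: "'v set \<Rightarrow> 'v set \<Rightarrow> ('v \<Rightarrow> 'v set) \<Rightarrow> ('v form \<Rightarrow> 'v form) \<Rightarrow> bool" where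
  "admissible X Y D g = (bij g \<and> preserves_sat g
     \<and> (\<forall>x\<in>X. g (Var x) \<in> BF X)
     \<and> (\<forall>y\<in>Y. g (Var y) \<in> BF Y)
     \<and> (\<forall>y\<in>Y. \<forall>x\<in>X. depends_on D (g (Var y)) x \<longrightarrow> Hilbert_Choice.inv g (Var x) \<in> BF (D y)))"

definition admissible_group :: "'v set \<Rightarrow> 'v set \<Rightarrow> ('v \<Rightarrow> 'v set) \<Rightarrow> ('v form \<Rightarrow> 'v form) set \<Rightarrow> bool" where
  "admissible_group X Y D Gs = (subgroup Gs (BijGroup (UNIV :: 'v form set))
                               \<and> (\<forall>g\<in>Gs. admissible X Y D g))"

definition syntactic_symmetry_group :: "'v set \<Rightarrow> 'v set \<Rightarrow> ('v \<Rightarrow> 'v set) \<Rightarrow> 'v form \<Rightarrow> ('v form \<Rightarrow> 'v form) set \<Rightarrow> bool" where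
  "syntactic_symmetry_group X Y D \<phi> Gs = (admissible_group X Y D Gs
     \<and> (\<forall>g\<in>Gs. \<forall>s\<in>Interp Y D. dqbf_val X Y \<phi> s = dqbf_val X Y (g \<phi>) s))"

(* associated group: bijections of S(P) (extensional, as in BijGroup) *)
definition associated_group :: "'v set \<Rightarrow> 'v set \<Rightarrow> ('v \<Rightarrow> 'v set) \<Rightarrow> ('v form \<Rightarrow> 'v form) set
    \<Rightarrow> (('v \<Rightarrow> ('v \<Rightarrow> bool) \<Rightarrow> bool) \<Rightarrow> ('v \<Rightarrow> ('v \<Rightarrow> bool) \<Rightarrow> bool)) set" where
  "associated_group X Y D Gs = {f \<in> Bij (Interp Y D).
     \<forall>s\<in>Interp Y D. \<forall>\<sigma>\<in>Asg X. \<exists>g\<in>Gs.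
        ext_asg Y (f s) (act_asgX X g \<sigma>) = act_asg g (ext_asg Y s \<sigma>)}"

definition semantic_symmetry_group :: "'v set \<Rightarrow> 'v set \<Rightarrow> ('v \<Rightarrow> 'v set) \<Rightarrow> 'v form
    \<Rightarrow> (('v \<Rightarrow> ('v \<Rightarrow> bool) \<Rightarrow> bool) \<Rightarrow> ('v \<Rightarrow> ('v \<Rightarrow> bool) \<Rightarrow> bool)) set \<Rightarrow> bool" where
  "semantic_symmetry_group X Y D \<phi> Gs = (subgroup Gs (BijGroup (Interp Y D))
     \<and> (\<forall>f\<in>Gs. \<forall>s\<in>Interp Y D. dqbf_val X Y \<phi> s = dqbf_val X Y \<phi> (f s)))"

end

theory Submission
  imports Defs "HOL-Algebra.Multiplicative_Group" "HOL-Library.Cardinality"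
begin

text \<open>
  For \<open>f\<close> in the associated group, each universal assignment \<open>\<sigma>\<close> comes with a syntactic
  symmetry \<open>g\<close> that carries \<open>\<sigma>\<close> extended by \<open>s\<close> to \<open>g(\<sigma>)\<close> extended by \<open>f(s)\<close>. As \<open>g\<close>
  preserves satisfiability and \<open>inv g \<phi>\<close> has the same models as \<open>\<phi>\<close>, truth of \<open>\<phi>\<close> under
  \<open>f(s)\<close> at \<open>g(\<sigma>)\<close> gives truth of \<open>\<phi>\<close> under \<open>s\<close> at \<open>\<sigma>\<close>; the converse is the same
  argument for the inverse of \<open>f\<close>. That inverse exists in the associated set because the
  actions of syntactic symmetries on assignments compose, so the set contains the identity and
  is closed under composition, and there are only finitely many interpretations.
\<close>

lemma (in group) finite_submonoid_imp_subgroup: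
  assumes fin: "finite (carrier G)" and sub: "submonoid H G"
  shows "subgroup H G"
proof (rule submonoid_subgroupI[OF sub])
  fix a assume aH: "a \<in> H"
  have a: "a \<in> carrier G" using aH sub by (simp add: submonoid_def subset_iff)
  have pow_in_H: "a [^] (n::nat) \<in> H" for n
    by (induction n) (simp_all add: aH submonoid.one_closed[OF sub] submonoid.m_closed[OF sub])
  have "a [^] (ord a - 1) \<otimes> a = a [^] ord a"
    using ord_ge_1[OF fin a] a by (metis Suc_diff_1 less_le_trans nat_pow_Suc zero_less_one)
  then have "inv a = a [^] (ord a - 1)"
    using a by (simp add: inv_equality)
  then show "inv a \<in> H" using pow_in_H by simp
qed

lemma subgroup_BijGroup_UNIV_id:
  assumes "subgroup H (BijGroup UNIV)"
  shows "id \<in> H"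
  using subgroup.one_closed[OF assms] by (simp add: BijGroup_def restrict_def id_def)

lemma subgroup_BijGroup_UNIV_comp:
  assumes H: "subgroup H (BijGroup UNIV)" and "f \<in> H" "g \<in> H"
  shows "f \<circ> g \<in> H"
proof -
  have "f \<in> Bij UNIV" "g \<in> Bij UNIV"
    using assms subgroup.subset[OF H] by (auto simp: BijGroup_def)
  then show ?thesis
    using subgroup.m_closed[OF H \<open>f \<in> H\<close> \<open>g \<in> H\<close>]
    by (simp add: BijGroup_def compose_def restrict_def comp_def)
qed

lemma subgroup_BijGroup_UNIV_inv:
  assumes H: "subgroup H (BijGroup UNIV)" and "f \<in> H"
  shows "Hilbert_Choice.inv f \<in> H"
proof -
  have "f \<in> Bij UNIV" using assms subgroup.subset[OF H] by (auto simp: BijGroup_def)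
  then show ?thesis
    using subgroup.m_inv_closed[OF H \<open>f \<in> H\<close>] by (simp add: inv_BijGroup restrict_def)
qed

lemma finite_carrier_BijGroup_Interp:
  assumes "finite (UNIV :: 'v set)"
  shows "finite (carrier (BijGroup (Interp Y (D :: 'v \<Rightarrow> 'v set))))"
  by (rule finite_subset[OF subset_UNIV]) (simp add: assms finite_UNIV_fun)

lemma feval_cong: "(\<And>v. v \<in> fvars \<phi> \<Longrightarrow> \<rho> v = \<rho>' v) \<Longrightarrow> feval \<phi> \<rho> = feval \<phi> \<rho>'"
  by (induction \<phi>) auto

lemma feval_inv_act_asg:
  assumes "preserves_sat g" "bij g"
  shows "feval (Hilbert_Choice.inv g \<phi>) (act_asg g \<rho>) = feval \<phi> \<rho>"
proof -
  have "feval (Hilbert_Choice.inv g \<phi>) (act_asg g \<rho>) = feval (g (Hilbert_Choice.inv g \<phi>)) \<rho>"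
    using assms(1) by (simp add: preserves_sat_def)
  then show ?thesis using assms(2) by (simp add: bij_is_surj surj_f_inv_f)
qed

lemma act_asg_id: "act_asg id \<rho> = \<rho>"
  by (simp add: act_asg_def)

lemma act_asgX_id: "\<sigma> \<in> Asg X \<Longrightarrow> act_asgX X id \<sigma> = \<sigma>"
  by (auto simp: act_asgX_def Asg_def)

lemma act_asgX_in_Asg: "act_asgX X g \<sigma> \<in> Asg X"
  by (simp add: act_asgX_def Asg_def)

lemma act_asg_comp:
  assumes "preserves_sat g"
  shows "act_asg f (act_asg g \<rho>) = act_asg (g \<circ> f) \<rho>"
proof
  fix v
  have "feval (g (f (Var v))) \<rho> = feval (f (Var v)) (act_asg g \<rho>)"
    using assms by (simp add: preserves_sat_def)
  then show "act_asg f (act_asg g \<rho>) v = act_asg (g \<circ> f) \<rho> v"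
    by (simp add: act_asg_def)
qed

lemma act_asgX_comp:
  assumes "preserves_sat g" and "\<forall>x\<in>X. f (Var x) \<in> BF X"
  shows "act_asgX X f (act_asgX X g \<sigma>) = act_asgX X (g \<circ> f) \<sigma>"
proof
  fix v
  show "act_asgX X f (act_asgX X g \<sigma>) v = act_asgX X (g \<circ> f) \<sigma> v"
  proof (cases "v \<in> X")
    case True
    \<comment> \<open>\<open>f (Var v)\<close> only mentions variables of \<open>X\<close>, where \<open>act_asgX X g\<close> and \<open>act_asg g\<close> agree\<close>
    have "feval (f (Var v)) (act_asgX X g \<sigma>) = feval (f (Var v)) (act_asg g \<sigma>)"
      using assms(2) True by (intro feval_cong) (auto simp: BF_def act_asgX_def act_asg_def)
    also have "\<dots> = act_asg (g \<circ> f) \<sigma> v"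
      using act_asg_comp[OF assms(1)] by (metis act_asg_def)
    finally show ?thesis
      using True by (simp add: act_asgX_def act_asg_def)
  qed (simp add: act_asgX_def)
qed

lemma associated_group_submonoid:
  assumes "admissible_group X Y D Gs"
  shows "submonoid (associated_group X Y D Gs) (BijGroup (Interp Y D))"
proof -
  let ?S = "Interp Y D"
  have H: "subgroup Gs (BijGroup UNIV)"
    and ps: "\<And>g. g \<in> Gs \<Longrightarrow> preserves_sat g"
    and bx: "\<And>g. g \<in> Gs \<Longrightarrow> \<forall>x\<in>X. g (Var x) \<in> BF X"
    using assms by (auto simp: admissible_group_def admissible_def)
  show ?thesis
  proof
    show "associated_group X Y D Gs \<subseteq> carrier (BijGroup ?S)"
      by (auto simp: associated_group_def BijGroup_def)
    show "\<one>\<^bsub>BijGroup ?S\<^esub> \<in> associated_group X Y D Gs"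
      using subgroup_BijGroup_UNIV_id[OF H]
      by (force simp: associated_group_def BijGroup_def id_Bij act_asgX_id act_asg_id)
  next
    fix f1 f2
    assume f1: "f1 \<in> associated_group X Y D Gs" and f2: "f2 \<in> associated_group X Y D Gs"
    then have f1B: "f1 \<in> Bij ?S" and f2B: "f2 \<in> Bij ?S"
      by (auto simp: associated_group_def)
    have "compose ?S f1 f2 \<in> associated_group X Y D Gs"
      unfolding associated_group_def
    proof (intro CollectI conjI ballI)
      show "compose ?S f1 f2 \<in> Bij ?S" using f1B f2B by (rule compose_Bij)
      fix s \<sigma> assume s: "s \<in> ?S" and \<sigma>: "\<sigma> \<in> Asg X"
      obtain g2 where g2: "g2 \<in> Gs"
        and e2: "ext_asg Y (f2 s) (act_asgX X g2 \<sigma>) = act_asg g2 (ext_asg Y s \<sigma>)"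
        using f2 s \<sigma> by (auto simp: associated_group_def)
      have f2s: "f2 s \<in> ?S" using f2B s by (rule Bij_imp_funcset[THEN funcset_mem])
      obtain g1 where g1: "g1 \<in> Gs"
        and e1: "ext_asg Y (f1 (f2 s)) (act_asgX X g1 (act_asgX X g2 \<sigma>))
                 = act_asg g1 (ext_asg Y (f2 s) (act_asgX X g2 \<sigma>))"
        using f1 f2s act_asgX_in_Asg by (fastforce simp: associated_group_def)
      have "ext_asg Y (compose ?S f1 f2 s) (act_asgX X (g2 \<circ> g1) \<sigma>)
            = act_asg (g2 \<circ> g1) (ext_asg Y s \<sigma>)"
        using e1 e2 s by (simp add: compose_def act_asgX_comp[OF ps[OF g2] bx[OF g1]]
            act_asg_comp[OF ps[OF g2]])
      then show "\<exists>g\<in>Gs. ext_asg Y (compose ?S f1 f2 s) (act_asgX X g \<sigma>)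
                       = act_asg g (ext_asg Y s \<sigma>)"
        using subgroup_BijGroup_UNIV_comp[OF H g2 g1] by blast
    qed
    then show "f1 \<otimes>\<^bsub>BijGroup ?S\<^esub> f2 \<in> associated_group X Y D Gs"
      using f1B f2B by (simp add: BijGroup_def)
  qed
qed

lemma subgroup_associated_group:
  assumes "finite (UNIV :: 'v set)" and "admissible_group X Y D (Gs :: ('v form \<Rightarrow> 'v form) set)"
  shows "subgroup (associated_group X Y D Gs) (BijGroup (Interp Y D))"
  using group_BijGroup assms
  by (intro group.finite_submonoid_imp_subgroup finite_carrier_BijGroup_Interp
      associated_group_submonoid)

lemma dqbf_val_associated_group_reflect:
  assumes sym: "syntactic_symmetry_group X Y D \<phi> Gs"
    and f: "f \<in> associated_group X Y D Gs" and s: "s \<in> Interp Y D"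
    and val: "dqbf_val X Y \<phi> (f s)"
  shows "dqbf_val X Y \<phi> s"
  unfolding dqbf_val_def
proof
  fix \<sigma> assume \<sigma>: "\<sigma> \<in> Asg X"
  obtain g where g: "g \<in> Gs"
    and e: "ext_asg Y (f s) (act_asgX X g \<sigma>) = act_asg g (ext_asg Y s \<sigma>)"
    using f s \<sigma> by (auto simp: associated_group_def)
  have H: "subgroup Gs (BijGroup UNIV)" and adm: "admissible X Y D g"
    using sym g by (auto simp: syntactic_symmetry_group_def admissible_group_def)
  have fs: "f s \<in> Interp Y D"
    using f s by (auto simp: associated_group_def dest: Bij_imp_funcset[THEN funcset_mem])
  have "dqbf_val X Y (Hilbert_Choice.inv g \<phi>) (f s)"
    using sym val fs subgroup_BijGroup_UNIV_inv[OF H g]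
    by (auto simp: syntactic_symmetry_group_def)
  then have "feval (Hilbert_Choice.inv g \<phi>) (ext_asg Y (f s) (act_asgX X g \<sigma>))"
    unfolding dqbf_val_def using act_asgX_in_Asg by blast
  then have "feval (Hilbert_Choice.inv g \<phi>) (act_asg g (ext_asg Y s \<sigma>))"
    by (simp only: e)
  then show "feval \<phi> (ext_asg Y s \<sigma>)"
    using adm by (simp add: admissible_def feval_inv_act_asg)
qed

theorem lemma5:
  fixes X Y :: "'v set" and D :: "'v \<Rightarrow> 'v set" and \<phi> :: "'v form"
    and Gsyn :: "('v form \<Rightarrow> 'v form) set"
  assumes "finite (UNIV :: 'v set)"
    and "X \<inter> Y = {}" and "X \<union> Y = UNIV"
    and "\<forall>y\<in>Y. D y \<subseteq> X"
    and "syntactic_symmetry_group X Y D \<phi> Gsyn"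
  shows "semantic_symmetry_group X Y D \<phi> (associated_group X Y D Gsyn)"
  unfolding semantic_symmetry_group_def
proof (intro conjI ballI)
  \<comment> \<open>only finiteness is used\<close>
  let ?A = "associated_group X Y D Gsyn" and ?S = "Interp Y D"
  show A: "subgroup ?A (BijGroup ?S)"
    using assms(1,5) by (simp add: subgroup_associated_group syntactic_symmetry_group_def)
  fix f s assume f: "f \<in> ?A" and s: "s \<in> ?S"
  have fB: "f \<in> Bij ?S" using f by (simp add: associated_group_def)
  have fs: "f s \<in> ?S" using fB s by (rule Bij_imp_funcset[THEN funcset_mem])
  have inv_f: "inv\<^bsub>BijGroup ?S\<^esub> f \<in> ?A" using A f by (rule subgroup.m_inv_closed)
  have "(inv\<^bsub>BijGroup ?S\<^esub> f) (f s) = s"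
    using fB s fs by (auto simp: inv_BijGroup Bij_def bij_betw_inv_into_left)
  then show "dqbf_val X Y \<phi> s = dqbf_val X Y \<phi> (f s)"
    using dqbf_val_associated_group_reflect[OF assms(5)] f s fs inv_f by metis
qed

end
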